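(* Let $\Gamma\in[0,1]$, $d_0\in(0,1]$, and $\gamma_N=\Gamma/(N-1)$. For $N\ge2$ define $h_N(k)$, $k=1,\dots,N$, by $h_N(N)=N$ and $h_N(k)=k\Big[1+\gamma_N(N-k)\frac{h_N(k+1)}{k+1}\Big]$ for $k<N$; equivalently $h_N(k)=k\big[1+(N-k)\gamma_N\big[1+(N-k-1)\gamma_N\big[1+\cdots\big]\big]\big]$ (the nested expression terminating after $N-k$ levels). Let $k_N\in\{1,\dots,N\}$ satisfy $k_N/N\to d_0$. Then $$\lim_{N\to\infty}\frac{h_N(k_N)}{N}=\frac{d_0}{1-\Gamma+\Gamma d_0}.$$ *)

theory Defs
  imports "HOL-Analysis.Analysis"
begin

definition gammaN :: "real \<Rightarrow> nat \<Rightarrow> real" where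
  "gammaN G N = G / (real N - 1)"

text \<open>h_N(k): h_N(N) = N and h_N(k) = k (1 + gamma_N (N - k) h_N(k+1)/(k+1)) for k < N.
  Values for k > N are irrelevant (set to N).\<close>
function hN :: "real \<Rightarrow> nat \<Rightarrow> nat \<Rightarrow> real" where
  "hN G N k = (if N \<le> k then real N
     else real k * (1 + gammaN G N * real (N - k) * hN G N (k + 1) / real (k + 1)))"
  by auto
termination by (relation "Wellfounded.measure (\<lambda>(G, N, k). N - k)") auto

declare hN.simps [simp del]

end

theory Submission
  imports Defs "HOL-Real_Asymp.Real_Asymp"
begin

(* Writing m = N - k, the recursion for h_N unfolds to
     h_N(k) = k * nest gamma_N m,
   where nest g m = 1 + m g (1 + (m-1) g (1 + ... (1 + g))) is the nested expression
   of the statement, i.e. nest g 0 = 1 and nest g (m+1) = 1 + (m+1) g nest g m.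
   For g >= 0 and y = g m < 1 this quantity is pinned down up to O(g):
     1/(1-y) - g/(1-y)^3  <=  nest g m  <=  1/(1-y).
   The upper bound follows from monotonicity in m; the lower bound from the
   increment estimate nest g (n+1) - nest g n <= g/(1-y)^2 for n < m.
   Hence nest g_N m_N -> 1/(1-c) whenever g_N -> 0 and g_N m_N -> c < 1.
   For the theorem, gamma_N -> 0 and gamma_N (N - k_N) -> Gamma (1 - d0) < 1, so
     h_N(k_N)/N = (k_N/N) * nest gamma_N (N - k_N) -> d0 / (1 - Gamma (1 - d0)). *)

fun nest :: "real \<Rightarrow> nat \<Rightarrow> real" where
  "nest g 0 = 1"
| "nest g (Suc m) = 1 + g * real (Suc m) * nest g m"

lemma hN_eq_nest:
  assumes "k \<le> N"
  shows "hN G N k = real k * nest (gammaN G N) (N - k)"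
  using assms
proof (induction "N - k" arbitrary: k)
  case 0
  then show ?case by (simp add: hN.simps)
next
  case (Suc n)
  then have "k < N" and rest: "N - (k + 1) = n" and len: "N - k = Suc n" by auto
  have IH: "hN G N (k + 1) = real (k + 1) * nest (gammaN G N) n"
    using Suc.hyps(1)[of "k + 1"] rest \<open>k < N\<close> by simp
  have "hN G N k = real k * (1 + gammaN G N * real (N - k) * hN G N (k + 1) / real (k + 1))"
    using \<open>k < N\<close> by (subst hN.simps) simp
  also have "\<dots> = real k * nest (gammaN G N) (N - k)"
    unfolding IH len by simp
  finally show ?case .
qed

lemma nest_ge_1: "0 \<le> g \<Longrightarrow> 1 \<le> nest g m"
  by (induction m) auto

lemma nest_mono_Suc: "0 \<le> g \<Longrightarrow> nest g m \<le> nest g (Suc m)"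
proof (induction m)
  case (Suc m)
  have "g * real (Suc m) * nest g m \<le> g * real (Suc (Suc m)) * nest g (Suc m)"
    using Suc nest_ge_1[of g m] by (intro mult_mono) auto
  then show ?case by simp
qed simp

text \<open>Upper bound: since nest g (m-1) <= nest g m, the recursion gives
  nest g m <= 1 + g m nest g m.\<close>
lemma nest_upper:
  assumes "0 \<le> g" and "g * real m < 1"
  shows "nest g m \<le> 1 / (1 - g * real m)"
proof (cases m)
  case (Suc n)
  have "nest g m = 1 + g * real m * nest g n" using Suc by simp
  also have "\<dots> \<le> 1 + g * real m * nest g m"
    using nest_mono_Suc[OF assms(1), of n] Suc assms(1) by (intro add_left_mono mult_left_mono) auto
  finally have "nest g m * (1 - g * real m) \<le> 1" by (simp add: algebra_simps)
  then show ?thesis using assms(2) by (simp add: field_simps)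
qed simp

text \<open>The increments of nest satisfy D(n+1) = g nest g n + g n D(n) <= g/(1-y) + y D(n),
  whose fixed point g/(1-y)^2 bounds them all (y = g m, n < m).\<close>
lemma nest_increment:
  assumes g: "0 \<le> g" and y: "g * real m < 1" and "Suc n \<le> m"
  shows "nest g (Suc n) - nest g n \<le> g / (1 - g * real m)^2"
  using \<open>Suc n \<le> m\<close>
proof (induction n)
  case 0
  have "(1 - g * real m)^2 \<le> 1" and "0 < (1 - g * real m)^2"
    using y g by (simp_all add: power2_eq_square mult_le_one)
  then have "g \<le> g / (1 - g * real m)^2"
    using g by (simp add: le_divide_eq mult_left_le)
  then show ?case by simp
next
  case (Suc p)
  define y where "y = g * real m"
  have "y < 1" and "0 \<le> y" using y g y_def by simp_all
  have gn_le: "g * real (Suc p) \<le> y"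
    unfolding y_def using Suc.prems g by (intro mult_left_mono) auto
  have nest_le: "nest g (Suc p) \<le> 1 / (1 - y)"
  proof -
    have "g * real (Suc p) < 1" using gn_le \<open>y < 1\<close> by linarith
    then have "nest g (Suc p) \<le> 1 / (1 - g * real (Suc p))"
      by (rule nest_upper[OF g])
    also have "\<dots> \<le> 1 / (1 - y)" using gn_le \<open>y < 1\<close> by (intro divide_left_mono) auto
    finally show ?thesis .
  qed
  have IH: "nest g (Suc p) - nest g p \<le> g / (1 - y)^2"
    using Suc y_def by simp
  have "nest g (Suc (Suc p)) - nest g (Suc p)
      = g * nest g (Suc p) + g * real (Suc p) * (nest g (Suc p) - nest g p)"
    by (simp add: algebra_simps)
  also have "\<dots> \<le> g * (1 / (1 - y)) + y * (g / (1 - y)^2)"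
    using nest_le IH gn_le g \<open>0 \<le> y\<close> nest_mono_Suc[OF g, of p]
    by (intro add_mono mult_left_mono mult_mono) auto
  also have "\<dots> = g / (1 - y)^2"
    using \<open>y < 1\<close> by (simp add: divide_simps power2_eq_square) (simp add: algebra_simps)
  finally show ?case unfolding y_def .
qed

text \<open>Lower bound: with the increment estimate, nest g m = 1 + y nest g (m-1)
  >= 1 + y (nest g m - g/(1-y)^2), which rearranges to the claim.\<close>
lemma nest_lower:
  assumes g: "0 \<le> g" and y: "g * real m < 1"
  shows "1 / (1 - g * real m) - g / (1 - g * real m)^3 \<le> nest g m"
proof (cases m)
  case 0
  then show ?thesis using g by simp
next
  case (Suc n)
  define y where "y = g * real m"
  have "y < 1" "0 \<le> y" using y g y_def by auto
  have incr: "nest g m - nest g n \<le> g / (1 - y)^2"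
    using nest_increment[OF g y, of n] Suc y_def by simp
  have "y * (g / (1 - y)^2) \<le> g / (1 - y)^2"
    using \<open>y < 1\<close> \<open>0 \<le> y\<close> g by (intro mult_left_le_one_le) auto
  then have "1 - g / (1 - y)^2 \<le> 1 - y * (g / (1 - y)^2)" by simp
  also have "\<dots> \<le> nest g m * (1 - y)"
  proof -
    have "1 + y * (nest g m - g / (1 - y)^2) \<le> 1 + y * nest g n"
      using incr \<open>0 \<le> y\<close> by (intro add_left_mono mult_left_mono) auto
    also have "\<dots> = nest g m" using Suc y_def by simp
    finally show ?thesis by (simp add: algebra_simps)
  qed
  finally have "(1 - g / (1 - y)^2) / (1 - y) \<le> nest g m"
    using \<open>y < 1\<close> by (simp add: divide_le_eq)
  moreover have "(1 - g / (1 - y)^2) / (1 - y) = 1 / (1 - y) - g / (1 - y)^3"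
    using \<open>y < 1\<close> by (simp add: divide_simps power2_eq_square power3_eq_cube)
  ultimately show ?thesis unfolding y_def by simp
qed

lemma nest_tendsto:
  fixes g :: "'a \<Rightarrow> real" and m :: "'a \<Rightarrow> nat"
  assumes g_nonneg: "eventually (\<lambda>x. 0 \<le> g x) F"
    and g_lim: "(g \<longlongrightarrow> 0) F"
    and y_lim: "((\<lambda>x. g x * real (m x)) \<longlongrightarrow> c) F" and "c < 1"
  shows "((\<lambda>x. nest (g x) (m x)) \<longlongrightarrow> 1 / (1 - c)) F"
proof (rule real_tendsto_sandwich)
  let ?y = "\<lambda>x. g x * real (m x)"
  have y_lt: "eventually (\<lambda>x. ?y x < 1) F"
    using order_tendstoD(2)[OF y_lim \<open>c < 1\<close>] .
  show "eventually (\<lambda>x. 1 / (1 - ?y x) - g x / (1 - ?y x)^3 \<le> nest (g x) (m x)) F"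
    using g_nonneg y_lt by eventually_elim (rule nest_lower)
  show "eventually (\<lambda>x. nest (g x) (m x) \<le> 1 / (1 - ?y x)) F"
    using g_nonneg y_lt by eventually_elim (rule nest_upper)
  have "1 - c \<noteq> 0" using \<open>c < 1\<close> by simp
  show upper_lim: "((\<lambda>x. 1 / (1 - ?y x)) \<longlongrightarrow> 1 / (1 - c)) F"
    using \<open>1 - c \<noteq> 0\<close> by (intro tendsto_intros y_lim) auto
  have "((\<lambda>x. g x / (1 - ?y x)^3) \<longlongrightarrow> 0 / (1 - c)^3) F"
    using \<open>1 - c \<noteq> 0\<close> by (intro tendsto_intros y_lim g_lim) auto
  from tendsto_diff[OF upper_lim this]
  show "((\<lambda>x. 1 / (1 - ?y x) - g x / (1 - ?y x)^3) \<longlongrightarrow> 1 / (1 - c)) F"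
    by simp
qed

lemma gammaN_gap_tendsto:
  fixes k :: "nat \<Rightarrow> nat"
  assumes k_le: "eventually (\<lambda>N. k N \<le> N) sequentially"
    and ratio: "(\<lambda>N. real (k N) / real N) \<longlonglongrightarrow> d"
  shows "(\<lambda>N. gammaN G N * real (N - k N)) \<longlonglongrightarrow> G * (1 - d)"
proof -
  have "(\<lambda>N. real N / (real N - 1)) \<longlonglongrightarrow> 1" by real_asymp
  then have lim: "(\<lambda>N. G * (real N / (real N - 1)) * (1 - real (k N) / real N))
      \<longlonglongrightarrow> G * 1 * (1 - d)"
    by (intro tendsto_intros ratio)
  have "eventually (\<lambda>N. G * (real N / (real N - 1)) * (1 - real (k N) / real N)
      = gammaN G N * real (N - k N)) sequentially"
    using k_le eventually_ge_at_top[of 2]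
  proof eventually_elim
    case (elim N)
    then have "real (N - k N) = real N - real (k N)" and "real N \<noteq> 0" "real N - 1 \<noteq> 0"
      by auto
    then show ?case unfolding gammaN_def by (simp add: field_simps)
  qed
  with lim show ?thesis by (simp add: tendsto_cong)
qed

theorem mainTheorem11:
  fixes G d0 :: real and k :: "nat \<Rightarrow> nat"
  assumes "0 \<le> G" "G \<le> 1" "0 < d0" "d0 \<le> 1"
    and "\<And>N. N \<ge> 2 \<Longrightarrow> 1 \<le> k N \<and> k N \<le> N"
    and "(\<lambda>N. real (k N) / real N) \<longlonglongrightarrow> d0"
  shows "(\<lambda>N. hN G N (k N) / real N) \<longlonglongrightarrow> d0 / (1 - G + G * d0)"
proof -
  have k_le: "eventually (\<lambda>N. k N \<le> N) sequentially"
    using eventually_ge_at_top[of 2] by eventually_elim (use assms(5) in blast)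
  have gamma_nonneg: "eventually (\<lambda>N. 0 \<le> gammaN G N) sequentially"
    using eventually_ge_at_top[of 1] by eventually_elim (use assms(1) in \<open>simp add: gammaN_def\<close>)
  have gamma_lim: "(\<lambda>N. gammaN G N) \<longlonglongrightarrow> 0"
    unfolding gammaN_def by real_asymp
  have "G * (1 - d0) < 1"
    using assms(1-4) by (smt (verit) mult_left_le_one_le)
  then have "(\<lambda>N. nest (gammaN G N) (N - k N)) \<longlonglongrightarrow> 1 / (1 - G * (1 - d0))"
    using nest_tendsto[OF gamma_nonneg gamma_lim gammaN_gap_tendsto[OF k_le assms(6)]] by blast
  then have "(\<lambda>N. real (k N) / real N * nest (gammaN G N) (N - k N))
      \<longlonglongrightarrow> d0 * (1 / (1 - G * (1 - d0)))"
    by (intro tendsto_mult assms(6))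
  moreover have "eventually (\<lambda>N. real (k N) / real N * nest (gammaN G N) (N - k N)
      = hN G N (k N) / real N) sequentially"
    using k_le
  proof eventually_elim
    case (elim N)
    show ?case using hN_eq_nest[OF elim, of G] by simp
  qed
  moreover have "d0 * (1 / (1 - G * (1 - d0))) = d0 / (1 - G + G * d0)"
    by (simp add: algebra_simps)
  ultimately show ?thesis
    using Lim_transform_eventually by metis
qed

end
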